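(* Let $x$ be a positive integer and $v=(v_1,v_2,\dots)$ a back tracing parity vector for $x$. Let $p_n$ be the number of $1$'s among $v_1,\dots,v_n$ divided by $n$. Then $\limsup_{n\to\infty}p_n\le\log_3 2$.
   Context: Let $T(z)=z/2$ for $z$ even and $T(z)=(3z+1)/2$ for $z$ odd. A sequence $(v_1,v_2,\dots)\in\{0,1\}^{\mathbb{N}}$ is a back tracing parity vector for a positive integer $x$ if there are positive integers $x_0=x,x_1,x_2,\dots$ with $T(x_i)=x_{i-1}$ and $x_i\equiv v_i\pmod 2$ for all $i\ge1$. *)

theory Defs
  imports Complex_Main "HOL-Library.Extended_Real"
begin

definition collatzT :: "nat \<Rightarrow> nat" where
  "collatzT z = (if even z then z div 2 else (3 * z + 1) div 2)"

text \<open>v (indexed from 1; v 0 is irrelevant) is a back tracing parity vector for x.\<close>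
definition back_tracing_parity_vector :: "(nat \<Rightarrow> nat) \<Rightarrow> nat \<Rightarrow> bool" where
  "back_tracing_parity_vector v x \<longleftrightarrow>
     (\<forall>i\<ge>1. v i \<in> {0, 1}) \<and>
     (\<exists>xs :: nat \<Rightarrow> nat. xs 0 = x \<and>
        (\<forall>i\<ge>1. xs i > 0 \<and> collatzT (xs i) = xs (i - 1) \<and> xs i mod 2 = v i mod 2))"

end

theory Submission
  imports Defs
begin

(* Let x = x_0, x_1, x_2, ... be the backward Collatz orbit realising the
   parity vector v, and let S_n = v_1 + ... + v_n be the number of odd terms among
   x_1, ..., x_n.  A single backward step satisfies  x_i * 3^(v_i) <= 2 * x_(i-1)
   (equality for an even x_i, and 3 x_i < 3 x_i + 1 for an odd one).  Multiplying these
   n inequalities gives  x_n * 3^(S_n) <= x * 2^n,  and since x_n >= 1 this yields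
   S_n <= log_3 x + n log_3 2.  Hence S_n / n <= log_3 2 + (log_3 x) / n, whose right-hand
   side tends to log_3 2, so the limsup of S_n / n is at most log_3 2. *)

lemma collatz_back_step:
  assumes "collatzT y = z" "v \<in> {0, 1}" "y mod 2 = v mod 2"
  shows "real y * 3 ^ v \<le> 2 * real z"
proof (cases "even y")
  case True
  then have "v = 0" and "z = y div 2"
    using assms by (auto simp: collatzT_def)
  with True show ?thesis by auto
next
  case False
  then have "v = 1" and "2 * z = 3 * y + 1"
    using assms by (auto simp: collatzT_def)
  then show ?thesis by simp
qed

lemma backward_orbit_bound:
  assumes start: "xs 0 = x"
    and parity: "\<forall>i\<ge>1. v i \<in> {0, 1}"
    and orbit: "\<forall>i\<ge>1. collatzT (xs i) = xs (i - 1) \<and> xs i mod 2 = v i mod 2"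
  shows "real (xs n) * 3 ^ (\<Sum>i=1..n. v i) \<le> real x * 2 ^ n"
proof (induction n)
  case 0
  then show ?case using start by simp
next
  case (Suc n)
  have step: "real (xs (Suc n)) * 3 ^ v (Suc n) \<le> 2 * real (xs n)"
    using collatz_back_step[of "xs (Suc n)" "xs n" "v (Suc n)"] parity orbit by auto
  have "real (xs (Suc n)) * 3 ^ (\<Sum>i=1..Suc n. v i)
      = (real (xs (Suc n)) * 3 ^ v (Suc n)) * 3 ^ (\<Sum>i=1..n. v i)"
    by (simp add: power_add)
  also have "\<dots> \<le> (2 * real (xs n)) * 3 ^ (\<Sum>i=1..n. v i)"
    using step by (intro mult_right_mono) auto
  also have "\<dots> \<le> 2 * (real x * 2 ^ n)"
    using Suc.IH by simp
  finally show ?case by simp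
qed

lemma odd_count_log_bound:
  assumes "y > 0" "real y * 3 ^ k \<le> real x * 2 ^ n"
  shows "real k \<le> log 3 (real x) + real n * log 3 2"
proof -
  have "(3::real) ^ k \<le> real y * 3 ^ k"
    using assms(1) by simp
  also have "\<dots> \<le> real x * 2 ^ n"
    by (rule assms(2))
  finally have pow: "(3::real) ^ k \<le> real x * 2 ^ n" .
  have "x > 0"
  proof (rule ccontr)
    assume "\<not> x > 0"
    then have "(3::real) ^ k \<le> 0"
      using pow by simp
    then show False
      by (metis not_le zero_less_numeral zero_less_power)
  qed
  have "log 3 ((3::real) ^ k) \<le> log 3 (real x * 2 ^ n)"
    using pow \<open>x > 0\<close> by (subst log_le_cancel_iff) auto
  then show ?thesis
    using \<open>x > 0\<close> by (simp add: log_mult log_nat_power)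
qed

lemma limsup_average_le:
  fixes a :: "nat \<Rightarrow> real"
  assumes bound: "\<And>n. a n \<le> C + real n * c"
  shows "limsup (\<lambda>n. ereal (a n / real n)) \<le> ereal c"
proof -
  have "eventually (\<lambda>n. ereal (a n / real n) \<le> ereal (c + C / real n)) sequentially"
    using eventually_ge_at_top[of 1]
  proof eventually_elim
    case (elim n)
    have "a n / real n \<le> (C + real n * c) / real n"
      using bound[of n] elim by (simp add: divide_right_mono)
    also have "\<dots> = c + C / real n"
      using elim by (simp add: field_simps)
    finally show ?case by simp
  qed
  then have "limsup (\<lambda>n. ereal (a n / real n)) \<le> limsup (\<lambda>n. ereal (c + C / real n))"
    by (rule Limsup_mono)
  also have "\<dots> = ereal c"
  proof (rule lim_imp_Limsup)
    show "(\<lambda>n. ereal (c + C / real n)) \<longlonglongrightarrow> ereal c"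
      using tendsto_add[OF tendsto_const lim_const_over_n[of C], of c]
      by (simp add: tendsto_ereal)
  qed simp
  finally show ?thesis .
qed

theorem mainTheorem9:
  fixes x :: nat and v :: "nat \<Rightarrow> nat"
  assumes "x > 0"
    and "back_tracing_parity_vector v x"
  shows "limsup (\<lambda>n. ereal ((\<Sum>i=1..n. real (v i)) / real n)) \<le> ereal (log 3 2)"
proof -
  obtain xs where start: "xs 0 = x" and parity: "\<forall>i\<ge>1. v i \<in> {0, 1}"
    and orbit: "\<forall>i\<ge>1. xs i > 0 \<and> collatzT (xs i) = xs (i - 1) \<and> xs i mod 2 = v i mod 2"
    using assms(2) unfolding back_tracing_parity_vector_def by blast
  have "(\<Sum>i=1..n. real (v i)) \<le> log 3 (real x) + real n * log 3 2" for n
  proof -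
    have "xs n > 0"
      using orbit start assms(1) by (cases n) auto
    moreover have "real (xs n) * 3 ^ (\<Sum>i=1..n. v i) \<le> real x * 2 ^ n"
      using backward_orbit_bound[of xs x v n] start parity orbit by blast
    ultimately show ?thesis
      using odd_count_log_bound by (metis of_nat_sum)
  qed
  then show ?thesis
    by (rule limsup_average_le)
qed

end
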